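(* Let $G$ be the infinite king grid. The code $C=\{(x,y)\in\mathbb{Z}^2\mid |x|+|y|\equiv 0\pmod 3\}$ is solid-locating-dominating in $G$ and its density is $1/3$.
   Context: The infinite king grid $G=(V,E)$ has $V=\mathbb{Z}^2$, and distinct vertices $(u_1,u_2)$, $(v_1,v_2)$ are adjacent iff $|u_1-v_1|\le1$ and $|u_2-v_2|\le1$. Let $V_n=\{(x,y)\mid |x|\le n,|y|\le n\}$; the density of a code $C\subseteq V$ is $D(C)=\limsup_{n\to\infty}|C\cap V_n|/|V_n|$. $N[v]$ is the closed neighbourhood of $v$, and for a code $C$, $I(C;v)=N[v]\cap C$. A code $C$ is solid-locating-dominating if for all distinct $u,v\in V\setminus C$, $I(C;u)\setminus I(C;v)\ne\emptyset$. *)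

theory Defs
  imports "HOL-Analysis.Analysis" "HOL-Library.Liminf_Limsup"
begin

type_synonym vertex = "int \<times> int"

definition king_adj :: "vertex \<Rightarrow> vertex \<Rightarrow> bool" where
  "king_adj u v \<longleftrightarrow> u \<noteq> v \<and> \<bar>fst u - fst v\<bar> \<le> 1 \<and> \<bar>snd u - snd v\<bar> \<le> 1"

definition closed_nbhd :: "vertex \<Rightarrow> vertex set" where
  "closed_nbhd v = {u. u = v \<or> king_adj u v}"

definition I_set :: "vertex set \<Rightarrow> vertex \<Rightarrow> vertex set" where
  "I_set C v = closed_nbhd v \<inter> C"

definition solid_locating_dominating :: "vertex set \<Rightarrow> bool" where
  "solid_locating_dominating C \<longleftrightarrow>
     (\<forall>u v. u \<notin> C \<and> v \<notin> C \<and> u \<noteq> v \<longrightarrow> I_set C u - I_set C v \<noteq> {})"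

definition V_box :: "nat \<Rightarrow> vertex set" where
  "V_box n = {(x, y). \<bar>x\<bar> \<le> int n \<and> \<bar>y\<bar> \<le> int n}"

definition density :: "vertex set \<Rightarrow> ereal" where
  "density C = limsup (\<lambda>n. ereal (real (card (C \<inter> V_box n)) / real (card (V_box n))))"

end

theory Submission
  imports Defs
begin

text \<open>
  Let C be the set of points whose l1-norm is divisible by 3. Every non-codeword u has three
  codewords in its closed neighbourhood whose closed neighbourhoods have no common non-codeword
  other than u; hence I(C;u) is not contained in I(C;v) for any other non-codeword v. Since C is
  invariant under the reflections of the grid, which are automorphisms of the king graph, it is
  enough to exhibit these codewords for u = (a, b) with 0 \<le> b \<le> a; there the l1-norm is
  x + y near u unless b = 0.

  For the density, the points of C in a column of the box V_n are those y with |y| in a fixed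
  residue class mod 3, so there are (2n + 1)/3 + O(1) of them and
  |C \<inter> V_n| = (2n + 1)^2/3 + O(n).
\<close>

lemma closed_nbhd_iff:
  "w \<in> closed_nbhd v \<longleftrightarrow> \<bar>fst w - fst v\<bar> \<le> 1 \<and> \<bar>snd w - snd v\<bar> \<le> 1"
  by (auto simp: closed_nbhd_def king_adj_def)

definition solidly_located :: "vertex set \<Rightarrow> vertex \<Rightarrow> bool" where
  "solidly_located C u \<longleftrightarrow> (\<forall>v. v \<notin> C \<and> I_set C u \<subseteq> I_set C v \<longrightarrow> v = u)"

lemma solid_locating_dominating_iff:
  "solid_locating_dominating C \<longleftrightarrow> (\<forall>u. u \<notin> C \<longrightarrow> solidly_located C u)"
  unfolding solid_locating_dominating_def solidly_located_def by blast

lemma solidly_located_if_common_neighbours: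
  assumes "W \<subseteq> I_set C u" and "\<And>v. v \<notin> C \<Longrightarrow> W \<subseteq> closed_nbhd v \<Longrightarrow> v = u"
  shows "solidly_located C u"
  using assms unfolding solidly_located_def I_set_def by blast

definition king_involution :: "(vertex \<Rightarrow> vertex) \<Rightarrow> bool" where
  "king_involution \<sigma> \<longleftrightarrow> (\<forall>u. \<sigma> (\<sigma> u) = u) \<and> (\<forall>u v. king_adj (\<sigma> u) (\<sigma> v) \<longleftrightarrow> king_adj u v)"

lemma I_set_king_involution_iff:
  assumes "king_involution \<sigma>" and "\<And>w. \<sigma> w \<in> C \<longleftrightarrow> w \<in> C"
  shows "w \<in> I_set C (\<sigma> u) \<longleftrightarrow> \<sigma> w \<in> I_set C u"
proof -
  have inv: "\<sigma> (\<sigma> x) = x" and adj: "king_adj (\<sigma> x) (\<sigma> y) \<longleftrightarrow> king_adj x y" for x y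
    using assms(1) unfolding king_involution_def by blast+
  have "w = \<sigma> u \<longleftrightarrow> \<sigma> w = u" using inv by metis
  moreover have "king_adj w (\<sigma> u) \<longleftrightarrow> king_adj (\<sigma> w) u" using adj[of w "\<sigma> u"] inv by simp
  ultimately show ?thesis using assms(2) by (auto simp: I_set_def closed_nbhd_def)
qed

lemma solidly_located_king_involution:
  assumes "king_involution \<sigma>" and "\<And>w. \<sigma> w \<in> C \<longleftrightarrow> w \<in> C"
    and "solidly_located C u"
  shows "solidly_located C (\<sigma> u)"
  unfolding solidly_located_def
proof (intro allI impI)
  fix v assume v: "v \<notin> C \<and> I_set C (\<sigma> u) \<subseteq> I_set C v"
  have inv: "\<sigma> (\<sigma> x) = x" for x using assms(1) unfolding king_involution_def by blast
  note I_iff = I_set_king_involution_iff[OF assms(1,2)]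
  have "I_set C u \<subseteq> I_set C (\<sigma> v)"
  proof
    fix w assume "w \<in> I_set C u"
    then have "\<sigma> w \<in> I_set C (\<sigma> u)" by (simp add: I_iff inv)
    then show "w \<in> I_set C (\<sigma> v)" using v by (auto simp: I_iff)
  qed
  moreover have "\<sigma> v \<notin> C" using v assms(2) by blast
  ultimately have "\<sigma> v = u" using assms(3) unfolding solidly_located_def by blast
  then show "v = \<sigma> u" using inv by metis
qed

lemma king_involution_reflections:
  "king_involution (\<lambda>(x, y). (- x, y))"
  "king_involution (\<lambda>(x, y). (x, - y))"
  "king_involution (\<lambda>(x, y). (y, x))"
  by (auto simp: king_involution_def king_adj_def abs_minus_commute)

definition mod3_code :: "vertex set" where
  "mod3_code = {(x, y). (\<bar>x\<bar> + \<bar>y\<bar>) mod 3 = 0}"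

lemma mod3_code_reflections:
  "(- x, y) \<in> mod3_code \<longleftrightarrow> (x, y) \<in> mod3_code"
  "(x, - y) \<in> mod3_code \<longleftrightarrow> (x, y) \<in> mod3_code"
  "(y, x) \<in> mod3_code \<longleftrightarrow> (x, y) \<in> mod3_code"
  by (simp_all add: mod3_code_def add.commute)

lemma solidly_located_mod3_code_sector:
  assumes "0 \<le> b" "b \<le> a" "(a, b) \<notin> mod3_code"
  shows "solidly_located mod3_code (a, b)"
proof -
  have "(a + b) mod 3 = 1 \<or> (a + b) mod 3 = 2"
    using assms by (simp add: mod3_code_def) presburger
  then consider "1 \<le> b" "(a + b) mod 3 = 1" | "1 \<le> b" "(a + b) mod 3 = 2"
    | "b = 0" "a mod 3 = 1" | "b = 0" "a mod 3 = 2"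
    using assms(1) by (cases "b = 0") auto
  then show ?thesis
  proof cases
    case 1
    then have "(a - 1, b) \<in> mod3_code" "(a, b - 1) \<in> mod3_code" "(a + 1, b + 1) \<in> mod3_code"
      using assms(2) unfolding mod3_code_def by simp_all presburger+
    then show ?thesis
      by (intro solidly_located_if_common_neighbours[of "{(a - 1, b), (a, b - 1), (a + 1, b + 1)}"])
        (auto simp: I_set_def closed_nbhd_iff prod_eq_iff)
  next
    case 2
    then have "(a - 1, b - 1) \<in> mod3_code" "(a + 1, b) \<in> mod3_code" "(a, b + 1) \<in> mod3_code"
      using assms(2) unfolding mod3_code_def by simp_all presburger+
    then show ?thesis
      by (intro solidly_located_if_common_neighbours[of "{(a - 1, b - 1), (a + 1, b), (a, b + 1)}"])
        (auto simp: I_set_def closed_nbhd_iff prod_eq_iff)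
  next
    case 3
    then have "(a - 1, 0) \<in> mod3_code" "(a + 1, 1) \<in> mod3_code" "(a + 1, - 1) \<in> mod3_code"
      using assms(2) unfolding mod3_code_def by simp_all presburger+
    then show ?thesis
      using 3 by (intro solidly_located_if_common_neighbours[of "{(a - 1, 0), (a + 1, 1), (a + 1, - 1)}"])
        (auto simp: I_set_def closed_nbhd_iff prod_eq_iff)
  next
    case 4
    then have code: "(a + 1, 0) \<in> mod3_code" "(a, 1) \<in> mod3_code" "(a, - 1) \<in> mod3_code"
      using assms(2) unfolding mod3_code_def by simp_all presburger+
    show ?thesis
    proof (rule solidly_located_if_common_neighbours[of "{(a + 1, 0), (a, 1), (a, - 1)}"])
      show "{(a + 1, 0), (a, 1), (a, - 1)} \<subseteq> I_set mod3_code (a, b)"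
        using 4 code by (auto simp: I_set_def closed_nbhd_iff)
    next
      \<comment> \<open>The codeword (a + 1, 0) is also a common neighbour, so v \<notin> C is needed here.\<close>
      fix v assume v: "v \<notin> mod3_code" "{(a + 1, 0), (a, 1), (a, - 1)} \<subseteq> closed_nbhd v"
      obtain c d where cd: "v = (c, d)" by fastforce
      have "d = 0" "a \<le> c" "c \<le> a + 1" using v(2) by (auto simp: cd closed_nbhd_iff)
      then have "v = (a, 0) \<or> v = (a + 1, 0)" unfolding cd by force
      then show "v = (a, b)" using 4 code v(1) by auto
    qed
  qed
qed

lemma solidly_located_mod3_code_reflections:
  assumes "solidly_located mod3_code (x, y)"
  shows "solidly_located mod3_code (- x, y)" "solidly_located mod3_code (x, - y)"
    "solidly_located mod3_code (y, x)"
proof -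
  have "\<sigma> w \<in> mod3_code \<longleftrightarrow> w \<in> mod3_code"
    if "\<sigma> \<in> {\<lambda>(x, y). (- x, y), \<lambda>(x, y). (x, - y), \<lambda>(x, y). (y, x)}" for \<sigma> w
    using that by (cases w) (auto simp: mod3_code_reflections)
  then show "solidly_located mod3_code (- x, y)" "solidly_located mod3_code (x, - y)"
    "solidly_located mod3_code (y, x)"
    using solidly_located_king_involution[OF king_involution_reflections(1) _ assms]
      solidly_located_king_involution[OF king_involution_reflections(2) _ assms]
      solidly_located_king_involution[OF king_involution_reflections(3) _ assms]
    by simp_all
qed

lemma solidly_located_mod3_code:
  assumes "u \<notin> mod3_code"
  shows "solidly_located mod3_code u"
proof -
  obtain a b where u: "u = (a, b)" by fastforce
  have "(\<bar>a\<bar>, \<bar>b\<bar>) \<notin> mod3_code" "(\<bar>b\<bar>, \<bar>a\<bar>) \<notin> mod3_code"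
    using assms by (simp_all add: u mod3_code_def add.commute)
  then have "solidly_located mod3_code (\<bar>a\<bar>, \<bar>b\<bar>)"
    using solidly_located_mod3_code_sector[of "\<bar>b\<bar>" "\<bar>a\<bar>"]
      solidly_located_mod3_code_sector[of "\<bar>a\<bar>" "\<bar>b\<bar>"]
      solidly_located_mod3_code_reflections(3)[of "\<bar>b\<bar>" "\<bar>a\<bar>"]
    by (cases "\<bar>b\<bar> \<le> \<bar>a\<bar>") auto
  then have "solidly_located mod3_code (a, \<bar>b\<bar>)"
    using solidly_located_mod3_code_reflections(1) by (cases "0 \<le> a") force+
  then show ?thesis
    using solidly_located_mod3_code_reflections(2) unfolding u by (cases "0 \<le> b") force+
qed

lemma solid_locating_dominating_mod3_code: "solid_locating_dominating mod3_code"
  by (simp add: solid_locating_dominating_iff solidly_located_mod3_code)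

lemma residue_class_block:
  fixes a k r :: int
  assumes "0 < k"
  shows "{y \<in> {a..<a + k}. y mod k = r mod k} = {a + (r - a) mod k}"
proof (intro set_eqI iffI)
  fix y assume y: "y \<in> {y \<in> {a..<a + k}. y mod k = r mod k}"
  then have "(y - a) mod k = (r - a) mod k" by (intro mod_diff_cong) auto
  moreover have "(y - a) mod k = y - a" using y by (intro mod_pos_pos_trivial) auto
  ultimately show "y \<in> {a + (r - a) mod k}" by simp
next
  fix y assume "y \<in> {a + (r - a) mod k}"
  moreover have "(a + (r - a) mod k) mod k = r mod k" by (simp add: mod_add_right_eq)
  ultimately show "y \<in> {y \<in> {a..<a + k}. y mod k = r mod k}"
    using assms by simp
qed

lemma card_residue_class_interval:
  fixes a k r :: int
  assumes "0 < k"
  shows "\<bar>k * int (card {y \<in> {a..<a + int m}. y mod k = r mod k}) - int m\<bar> \<le> k"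
proof (induction m rule: less_induct)
  case (less m)
  let ?S = "\<lambda>b c. {y \<in> {b..<c}. y mod k = r mod k}"
  have block: "card (?S b (b + k)) = 1" for b
    using residue_class_block[OF assms] by simp
  have finite: "finite (?S b c)" for b c by (rule finite_subset[of _ "{b..<c}"]) auto
  show ?case
  proof (cases "int m < k")
    case True
    have "card (?S a (a + int m)) \<le> card (?S a (a + k))"
      using True by (intro card_mono finite) auto
    then have "card (?S a (a + int m)) \<in> {0, 1}" using block[of a] by auto
    then show ?thesis using True by auto
  next
    case False
    define m' where "m' = m - nat k"
    have m: "int m = int m' + k" and "m' < m" using False assms by (simp_all add: m'_def)
    have split: "?S a (a + int m) = ?S a (a + int m') \<union> ?S (a + int m') (a + int m' + k)"
      using assms by (auto simp: m)
    have "card (?S a (a + int m)) = card (?S a (a + int m')) + 1"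
      unfolding split using block finite by (subst card_Un_disjoint) auto
    then show ?thesis using less[OF \<open>m' < m\<close>] m by (simp add: algebra_simps)
  qed
qed

lemma card_abs_le_int:
  "card {y :: int. \<bar>y\<bar> \<le> n \<and> P \<bar>y\<bar>} = card {y \<in> {0..n}. P y} + card {y \<in> {1..n}. P y}"
proof -
  have split: "{y. \<bar>y\<bar> \<le> n \<and> P \<bar>y\<bar>} = {y \<in> {0..n}. P y} \<union> uminus ` {y \<in> {1..n}. P y}"
  proof (intro set_eqI iffI)
    fix y assume "y \<in> {y. \<bar>y\<bar> \<le> n \<and> P \<bar>y\<bar>}"
    then show "y \<in> {y \<in> {0..n}. P y} \<union> uminus ` {y \<in> {1..n}. P y}"
      by (cases "0 \<le> y") (auto intro!: image_eqI[of y uminus "- y"])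
  qed auto
  have finite: "finite {y \<in> {a..n}. P y}" for a by (rule finite_subset[of _ "{a..n}"]) auto
  have "card {y. \<bar>y\<bar> \<le> n \<and> P \<bar>y\<bar>} = card {y \<in> {0..n}. P y} + card (uminus ` {y \<in> {1..n}. P y})"
    unfolding split using finite by (intro card_Un_disjoint) auto
  also have "card (uminus ` {y \<in> {1..n}. P y}) = card {y \<in> {1..n}. P y}"
    by (intro card_image) simp
  finally show ?thesis .
qed

lemma card_mod3_code_column:
  "\<bar>3 * int (card {y. \<bar>y\<bar> \<le> int n \<and> (x, y) \<in> mod3_code}) - (2 * int n + 1)\<bar> \<le> 6"
proof -
  let ?Q = "\<lambda>y. y mod 3 = (- \<bar>x\<bar>) mod 3"
  have code: "(x, y) \<in> mod3_code \<longleftrightarrow> ?Q \<bar>y\<bar>" for y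
    by (simp add: mod3_code_def) presburger
  have nonneg: "{y \<in> {0..int n}. ?Q y} = {y \<in> {0..<0 + int (n + 1)}. ?Q y}"
    and pos: "{y \<in> {1..int n}. ?Q y} = {y \<in> {1..<1 + int n}. ?Q y}"
    by auto
  have "card {y. \<bar>y\<bar> \<le> int n \<and> (x, y) \<in> mod3_code}
      = card {y \<in> {0..<0 + int (n + 1)}. ?Q y} + card {y \<in> {1..<1 + int n}. ?Q y}"
    using card_abs_le_int[of "int n" ?Q] unfolding code nonneg pos .
  then show ?thesis
    using card_residue_class_interval[of 3 0 "n + 1" "- \<bar>x\<bar>"]
      card_residue_class_interval[of 3 1 n "- \<bar>x\<bar>"]
    by linarith
qed

lemma card_V_box: "card (V_box n) = (2 * n + 1)^2"
proof -
  have "V_box n = {- int n..int n} \<times> {- int n..int n}" by (auto simp: V_box_def)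
  then show ?thesis
    by (simp add: card_cartesian_product power2_eq_square nat_add_distrib nat_mult_distrib)
qed

lemma card_Int_V_box:
  "card (C \<inter> V_box n) = (\<Sum>x \<in> {- int n..int n}. card {y. \<bar>y\<bar> \<le> int n \<and> (x, y) \<in> C})"
proof -
  have "C \<inter> V_box n = Sigma {- int n..int n} (\<lambda>x. {y. \<bar>y\<bar> \<le> int n \<and> (x, y) \<in> C})"
    by (auto simp: V_box_def)
  moreover have "finite {y. \<bar>y\<bar> \<le> int n \<and> (x, y) \<in> C}" for x
    by (rule finite_subset[of _ "{- int n..int n}"]) auto
  ultimately show ?thesis by simp
qed

lemma card_mod3_code_box:
  "\<bar>3 * int (card (mod3_code \<inter> V_box n)) - (2 * int n + 1)^2\<bar> \<le> 6 * (2 * int n + 1)"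
proof -
  let ?col = "\<lambda>x. card {y. \<bar>y\<bar> \<le> int n \<and> (x, y) \<in> mod3_code}"
  have "3 * int (card (mod3_code \<inter> V_box n)) - (2 * int n + 1)^2
      = (\<Sum>x \<in> {- int n..int n}. 3 * int (?col x) - (2 * int n + 1))"
    by (simp add: card_Int_V_box sum_subtractf sum_distrib_left power2_eq_square)
  also have "\<bar>\<dots>\<bar> \<le> (\<Sum>x \<in> {- int n..int n}. \<bar>3 * int (?col x) - (2 * int n + 1)\<bar>)"
    by (rule sum_abs)
  also have "\<dots> \<le> (\<Sum>x \<in> {- int n..int n}. 6)"
    by (intro sum_mono card_mod3_code_column)
  also have "\<dots> = 6 * (2 * int n + 1)" by simp
  finally show ?thesis .
qed

lemma density_eqI:
  assumes "(\<lambda>n. real (card (C \<inter> V_box n)) / real (card (V_box n))) \<longlonglongrightarrow> d"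
  shows "density C = ereal d"
  unfolding density_def using assms by (intro lim_imp_Limsup) auto

lemma mod3_code_ratio_bound:
  "\<bar>real (card (mod3_code \<inter> V_box n)) / real (card (V_box n)) - 1/3\<bar> \<le> 2 / real (Suc n)"
proof -
  define T where "T = real (card (mod3_code \<inter> V_box n))"
  define N where "N = 2 * real n + 1"
  have N: "N > 0" "real (card (V_box n)) = N^2" by (simp_all add: N_def card_V_box)
  have "real_of_int \<bar>3 * int (card (mod3_code \<inter> V_box n)) - (2 * int n + 1)^2\<bar>
      \<le> real_of_int (6 * (2 * int n + 1))"
    by (simp only: of_int_le_iff card_mod3_code_box)
  then have bound: "\<bar>3 * T - N^2\<bar> \<le> 6 * N"
    by (simp add: T_def N_def)
  have "T / N^2 - 1/3 = (3 * T - N^2) / (3 * N^2)"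
    using N by (simp add: field_simps)
  then have "\<bar>T / N^2 - 1/3\<bar> = \<bar>3 * T - N^2\<bar> / (3 * N^2)"
    by simp
  also have "\<dots> \<le> 6 * N / (3 * N^2)"
    using bound by (intro divide_right_mono) auto
  also have "\<dots> = 2 / N"
    using N by (simp add: power2_eq_square)
  also have "\<dots> \<le> 2 / real (Suc n)"
    unfolding N_def by (intro divide_left_mono) auto
  finally show ?thesis unfolding T_def N(2) .
qed

lemma density_mod3_code: "density mod3_code = ereal (1/3)"
proof (rule density_eqI)
  let ?r = "\<lambda>n. real (card (mod3_code \<inter> V_box n)) / real (card (V_box n))"
  have "(\<lambda>n. ?r n - 1/3) \<longlonglongrightarrow> 0"
  proof (rule Lim_null_comparison)
    show "\<forall>\<^sub>F n in sequentially. norm (?r n - 1/3) \<le> 2 / real (Suc n)"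
      using mod3_code_ratio_bound by (intro always_eventually allI) (simp only: real_norm_def)
    show "(\<lambda>n. 2 / real (Suc n)) \<longlonglongrightarrow> 0"
      by (rule LIMSEQ_Suc[OF lim_const_over_n])
  qed
  then show "?r \<longlonglongrightarrow> 1/3" by (simp add: LIM_zero_iff)
qed

theorem theorem9:
  shows "solid_locating_dominating {(x, y). (\<bar>x\<bar> + \<bar>y\<bar>) mod 3 = 0}
    \<and> density {(x, y). (\<bar>x\<bar> + \<bar>y\<bar>) mod 3 = 0} = ereal (1/3)"
  using solid_locating_dominating_mod3_code density_mod3_code unfolding mod3_code_def by blast

end
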